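(* Let $L_1,L_2\ge1$ and consider two groups of moduli $m_{i,k}=m^{(i)}\Gamma_{i,k}$ ($i=1,2$, $1\le k\le L_i$), where $m^{(i)}\ge1$ are integers and, for each $i$, the integers $\Gamma_{i,1},\dots,\Gamma_{i,L_i}\ge1$ are pairwise co-prime. Let $\eta_i=\mathrm{lcm}(m_{i,1},\dots,m_{i,L_i})$, assume $\eta_1<\eta_2$, let $m=\gcd(\eta_1,\eta_2)$, $\Gamma_i=\eta_i/m$, and assume $\Gamma_1>1$. Let $1\le j\le K+1$ (with $\sigma_j,K,\ddot n_{2,j},\ddot n_{1,j}$ computed from $\Gamma_1,\Gamma_2$ as in the context) and put $X=\min\big(\eta_2(1+\ddot n_{2,j}),\,\eta_1(1+\ddot n_{1,j})\big)$. Let $\tau_1,\tau_2\ge0$ be reals with $$\tau_1<\frac{m^{(1)}}{4},\qquad \tau_2<\frac{m^{(2)}}{4},\qquad \tau_1+\tau_2<\frac{m\sigma_j}{2}.$$ Then there exists a map $\Phi$ from tuples $(\tilde r_{i,k})_{i,k}$ of integers to tuples of integers such that for every integer $N$ with $0\le N<X$ and every tuple of integers $\tilde r_{i,k}$ with $0\le\tilde r_{i,k}<m_{i,k}$ and $|\tilde r_{i,k}-|N|_{m_{i,k}}|\le\tau_i$ for all $i,k$, one has $\Phi((\tilde r_{i,k})_{i,k})=(\lfloor N/m_{i,k}\rfloor)_{i,k}$; i.e., all folding integers of $N$ modulo the $m_{i,k}$ are accurately determined by the erroneous remainders.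
   Context: $|a|_b$ is the remainder of the integer $a$ modulo the positive integer $b$. Euclidean sequence for co-prime $1<\Gamma_1<\Gamma_2$: $\sigma_{-1}=\Gamma_2$, $\sigma_0=\Gamma_1$, $\sigma_i=|\sigma_{i-2}|_{\sigma_{i-1}}$ for $i\ge1$; $K\ge0$ is the index with $\sigma_K>1$, $\sigma_{K+1}=1$. For $1\le n<\Gamma_1$, $S_{2,n}=\{|t\Gamma_2|_{\Gamma_1}:0\le t\le n\}$ and $d_{2,n}$ is the minimum distance between distinct elements of $S_{2,n}$; for $1\le n<\Gamma_2$, $S_{1,n}=\{|t\Gamma_1|_{\Gamma_2}:0\le t\le n\}$ and $d_{1,n}$ likewise. $\ddot n_{2,j}=\max\{n:1\le n<\Gamma_1,\ d_{2,n}\ge\sigma_j\}$, $\ddot n_{1,j}=\max\{n:1\le n<\Gamma_2,\ d_{1,n}\ge\sigma_j\}$. The groups may overlap (a modulus may appear in both). *)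

theory Defs
  imports Complex_Main
begin

text \<open>Euclidean sequence for G1 < G2: the shifted sequence esq G1 G2 n is sigma_(n-1),
  i.e. esq 0 = sigma_(-1) = G2, esq 1 = sigma_0 = G1,
  esq (n+2) = esq n mod esq (n+1).\<close>
fun esq :: "nat \<Rightarrow> nat \<Rightarrow> nat \<Rightarrow> nat" where
  "esq G1 G2 0 = G2"
| "esq G1 G2 (Suc 0) = G1"
| "esq G1 G2 (Suc (Suc n)) = esq G1 G2 n mod esq G1 G2 (Suc n)"

definition sigma :: "nat \<Rightarrow> nat \<Rightarrow> int \<Rightarrow> nat" where
  "sigma G1 G2 i = esq G1 G2 (nat (i + 1))"

definition Kidx :: "nat \<Rightarrow> nat \<Rightarrow> nat" where
  "Kidx G1 G2 = (THE K. sigma G1 G2 (int K) > 1 \<and> sigma G1 G2 (int K + 1) = 1)"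

definition mindist :: "nat set \<Rightarrow> nat" where
  "mindist S = Min {(if a \<ge> b then a - b else b - a) | a b. a \<in> S \<and> b \<in> S \<and> a \<noteq> b}"

definition S2 :: "nat \<Rightarrow> nat \<Rightarrow> nat \<Rightarrow> nat set" where
  "S2 G1 G2 n = {(t * G2) mod G1 | t. t \<le> n}"

definition S1 :: "nat \<Rightarrow> nat \<Rightarrow> nat \<Rightarrow> nat set" where
  "S1 G1 G2 n = {(t * G1) mod G2 | t. t \<le> n}"

definition nddot2 :: "nat \<Rightarrow> nat \<Rightarrow> int \<Rightarrow> nat" where
  "nddot2 G1 G2 j = Max {n. 1 \<le> n \<and> n < G1 \<and> mindist (S2 G1 G2 n) \<ge> sigma G1 G2 j}"

definition nddot1 :: "nat \<Rightarrow> nat \<Rightarrow> int \<Rightarrow> nat" where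
  "nddot1 G1 G2 j = Max {n. 1 \<le> n \<and> n < G2 \<and> mindist (S1 G1 G2 n) \<ge> sigma G1 G2 j}"

definition modulus :: "(nat \<Rightarrow> nat) \<Rightarrow> (nat \<Rightarrow> nat \<Rightarrow> nat) \<Rightarrow> nat \<Rightarrow> nat \<Rightarrow> nat" where
  "modulus mu Gam i k = mu i * Gam i k"

definition eta :: "(nat \<Rightarrow> nat) \<Rightarrow> (nat \<Rightarrow> nat) \<Rightarrow> (nat \<Rightarrow> nat \<Rightarrow> nat) \<Rightarrow> nat \<Rightarrow> nat" where
  "eta L mu Gam i = Lcm ((\<lambda>k. modulus mu Gam i k) ` {1..L i})"

end

theory Submission
  imports Defs
begin

text \<open>If two admissible \<open>N, N'\<close> are consistent with the same erroneous remainders, then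
  inside group \<open>i\<close> the differences \<open>N mod m\<^sub>i\<^sub>,\<^sub>k - N' mod m\<^sub>i\<^sub>,\<^sub>k\<close> are congruent modulo
  \<open>mu i\<close> and smaller than \<open>mu i / 2\<close>, so they share a common value \<open>e\<^sub>i\<close>. Hence \<open>\<eta>\<^sub>i\<close>
  divides \<open>N - N' - e\<^sub>i\<close>, i.e. \<open>N - N' = e\<^sub>i + \<eta>\<^sub>i c\<^sub>i\<close>, and \<open>N, N' < X\<close> bounds \<open>|c\<^sub>i|\<close>
  by \<open>nddot\<close>. Dividing the difference of the two representations by \<open>m = gcd \<eta>\<^sub>1 \<eta>\<^sub>2\<close>
  gives \<open>|\<Gamma>\<^sub>1 c\<^sub>1 - \<Gamma>\<^sub>2 c\<^sub>2| < \<sigma>\<^sub>j\<close>, while the choice of \<open>nddot\<close> makes every nonzero residue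
  of a small multiple of \<open>\<Gamma>\<^sub>1\<close> modulo \<open>\<Gamma>\<^sub>2\<close> (and vice versa) at least \<open>\<sigma>\<^sub>j\<close>. This forces
  \<open>c\<^sub>1 = c\<^sub>2 = 0\<close>, so \<open>N - N' = e\<^sub>i\<close> and all folding integers of \<open>N\<close> and \<open>N'\<close> agree: the
  decoder may return those of any consistent \<open>N\<close>.\<close>

lemma esq_le_esq_2:
  assumes "0 < esq G1 G2 2" and "2 \<le> n"
  shows "esq G1 G2 n \<le> esq G1 G2 2"
  using assms(2)
proof (induction n rule: less_induct)
  case (less n)
  consider "n = 2" | "n = 3" | "4 \<le> n"
    using less.prems by linarith
  then show ?case
  proof cases
    case 1
    then show ?thesis by simp
  next
    case 2
    have "esq G1 G2 3 = esq G1 G2 1 mod esq G1 G2 2"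
      by (simp add: numeral_3_eq_3 numeral_2_eq_2)
    also have "\<dots> < esq G1 G2 2"
      using assms(1) by simp
    finally show ?thesis
      using 2 by simp
  next
    case 3
    define m where "m = n - 2"
    have n: "n = Suc (Suc m)" and m: "2 \<le> m"
      using 3 unfolding m_def by arith+
    have "esq G1 G2 n \<le> esq G1 G2 m"
      unfolding n by simp
    also have "\<dots> \<le> esq G1 G2 2"
      using less.IH m n by simp
    finally show ?thesis .
  qed
qed

lemma sigma_le_mod:
  assumes "0 < G2 mod G1" and "1 \<le> j"
  shows "sigma G1 G2 (int j) \<le> G2 mod G1"
proof -
  have "nat (int j + 1) = Suc j"
    by arith
  then have "sigma G1 G2 (int j) = esq G1 G2 (Suc j)"
    by (simp add: sigma_def)
  also have "\<dots> \<le> esq G1 G2 2"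
    using assms by (intro esq_le_esq_2) (simp_all add: numeral_2_eq_2)
  also have "esq G1 G2 2 = G2 mod G1"
    by (simp add: numeral_2_eq_2)
  finally show ?thesis .
qed

lemma mindist_le:
  assumes "finite S" and "a \<in> S" and "b \<in> S" and "a \<noteq> b"
  shows "mindist S \<le> (if b \<le> a then a - b else b - a)"
proof -
  let ?D = "{if b \<le> a then a - b else b - a | a b. a \<in> S \<and> b \<in> S \<and> a \<noteq> b}"
  let ?dist = "\<lambda>(a, b). if b \<le> a then a - b else (b::nat) - a"
  have "?D \<subseteq> ?dist ` (S \<times> S)"
  proof
    fix d
    assume "d \<in> ?D"
    then obtain a b where "a \<in> S" and "b \<in> S" and "d = (if b \<le> a then a - b else b - a)"
      by blast
    then show "d \<in> ?dist ` (S \<times> S)"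
      by (intro image_eqI[of _ _ "(a, b)"]) auto
  qed
  then have "finite ?D"
    using assms(1) by (meson finite_SigmaI finite_imageI finite_subset)
  then show ?thesis
    unfolding mindist_def using assms(2-4) by (intro Min_le) auto
qed

lemma mindist_zero_insert:
  assumes "0 < x"
  shows "mindist {0, x} = x"
proof -
  let ?D = "{if b \<le> a then a - b else b - a | a b. a \<in> {0, x} \<and> b \<in> {0, x} \<and> a \<noteq> b}"
  have "?D = {x}"
  proof (intro set_eqI iffI)
    fix d
    assume "d \<in> ?D"
    then show "d \<in> {x}"
      by auto
  next
    fix d
    assume "d \<in> {x}"
    then have "d = (if 0 \<le> x then x - 0 else 0 - x) \<and> x \<in> {0, x} \<and> (0::nat) \<in> {0, x} \<and> x \<noteq> 0"
      using assms by simp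
    then show "d \<in> ?D"
      by blast
  qed
  then show ?thesis
    by (simp add: mindist_def)
qed

lemma S1_eq_image: "S1 a b n = (\<lambda>t. (t * a) mod b) ` {..n}"
  by (auto simp: S1_def)

lemma S2_eq_S1: "S2 G1 G2 n = S1 G2 G1 n"
  by (simp add: S1_def S2_def)

lemma mindist_S1_one:
  assumes "0 < a mod b"
  shows "mindist (S1 a b 1) = a mod b"
proof -
  have "{..1::nat} = {0, 1}"
    by auto
  then have "S1 a b 1 = {0, a mod b}"
    by (simp add: S1_eq_image)
  then show ?thesis
    using assms by (simp add: mindist_zero_insert)
qed

lemma mindist_S1_le_residue:
  assumes "c \<le> n" and "(c * a) mod b \<noteq> 0"
  shows "mindist (S1 a b n) \<le> (c * a) mod b"
proof -
  have "(c * a) mod b \<in> S1 a b n" and "0 \<in> S1 a b n"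
    using assms(1) by (auto simp: S1_eq_image image_iff intro: bexI[of _ 0])
  then show ?thesis
    using mindist_le[of "S1 a b n" "(c * a) mod b" 0] assms(2) by (simp add: S1_eq_image)
qed

text \<open>Both \<open>nddot1\<close> and \<open>nddot2\<close> are instances of this maximum, with the roles of
  \<open>\<Gamma>\<^sub>1\<close> and \<open>\<Gamma>\<^sub>2\<close> exchanged.\<close>

lemma Max_mindist_S1:
  fixes a b B s :: nat
  assumes "1 < B" and "0 < a mod b" and "s \<le> a mod b"
  defines "n \<equiv> Max {n. 1 \<le> n \<and> n < B \<and> s \<le> mindist (S1 a b n)}"
  shows "n < B" and "\<And>c. c \<le> n \<Longrightarrow> (c * a) mod b \<noteq> 0 \<Longrightarrow> s \<le> (c * a) mod b"
proof -
  let ?A = "{n. 1 \<le> n \<and> n < B \<and> s \<le> mindist (S1 a b n)}"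
  have "mindist (S1 a b 1) = a mod b"
    using assms(2) by (rule mindist_S1_one)
  then have "1 \<in> ?A"
    using assms(1,3) by simp
  moreover have "finite ?A"
    by (rule finite_subset[of _ "{..<B}"]) auto
  ultimately have n: "n \<in> ?A"
    unfolding n_def by (intro Max_in) auto
  then show "n < B"
    by simp
  show "s \<le> (c * a) mod b" if "c \<le> n" and "(c * a) mod b \<noteq> 0" for c
    using n mindist_S1_le_residue[OF that] by simp
qed

lemma nddot2_residues:
  assumes "1 < G1" and "0 < G2 mod G1" and "sigma G1 G2 j \<le> G2 mod G1"
  shows "nddot2 G1 G2 j < G1"
    and "\<And>c. c \<le> nddot2 G1 G2 j \<Longrightarrow> (c * G2) mod G1 \<noteq> 0 \<Longrightarrow> sigma G1 G2 j \<le> (c * G2) mod G1"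
  using Max_mindist_S1[OF assms] unfolding nddot2_def S2_eq_S1 by blast+

lemma nddot1_residues:
  assumes "0 < G1" and "G1 < G2" and "sigma G1 G2 j \<le> G1"
  shows "\<And>c. c \<le> nddot1 G1 G2 j \<Longrightarrow> (c * G1) mod G2 \<noteq> 0 \<Longrightarrow> sigma G1 G2 j \<le> (c * G1) mod G2"
proof -
  have "1 < G2" and "0 < G1 mod G2" and "sigma G1 G2 j \<le> G1 mod G2"
    using assms by simp_all
  from Max_mindist_S1(2)[OF this] show "sigma G1 G2 j \<le> (c * G1) mod G2"
    if "c \<le> nddot1 G1 G2 j" and "(c * G1) mod G2 \<noteq> 0" for c
    using that unfolding nddot1_def by blast
qed

lemma int_mod_of_linear_combination:
  fixes a b :: nat and c q d :: int
  assumes "0 < c" and "0 \<le> d" and "d < int b" and "c * int a = d + int b * q"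
  shows "int ((nat c * a) mod b) = d"
proof -
  have "int ((nat c * a) mod b) = (c * int a) mod int b"
    using assms(1) by (simp add: of_nat_mod)
  also have "\<dots> = d"
    using assms(2-4) by simp
  finally show ?thesis .
qed

lemma no_small_positive_combination:
  fixes G1 G2 s n1 n2 :: nat and c1 c2 d :: int
  assumes "G1 < G2" and "s \<le> G1"
    and res1: "\<And>c. c \<le> n1 \<Longrightarrow> (c * G1) mod G2 \<noteq> 0 \<Longrightarrow> s \<le> (c * G1) mod G2"
    and res2: "\<And>c. c \<le> n2 \<Longrightarrow> (c * G2) mod G1 \<noteq> 0 \<Longrightarrow> s \<le> (c * G2) mod G1"
    and comb: "int G1 * c1 - int G2 * c2 = d" and "0 < d" and "d < int s"
    and "\<bar>c1\<bar> \<le> int n1" and "\<bar>c2\<bar> \<le> int n2"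
  shows False
proof (cases "0 < c1")
  case True
  have residue: "int ((nat c1 * G1) mod G2) = d"
    using True comb assms(1,2,6,7) by (intro int_mod_of_linear_combination[where q = c2]) auto
  have "nat c1 \<le> n1"
    using assms(8) by linarith
  moreover have "(nat c1 * G1) mod G2 \<noteq> 0"
    using residue \<open>0 < d\<close> by auto
  ultimately have "s \<le> (nat c1 * G1) mod G2"
    by (rule res1)
  with residue show False
    using \<open>d < int s\<close> by linarith
next
  case False
  then have "int G1 * c1 \<le> 0"
    by (simp add: mult_nonneg_nonpos)
  then have "int G2 * c2 < 0"
    using comb \<open>0 < d\<close> by linarith
  then have "0 < - c2"
    by (simp add: mult_less_0_iff)
  have residue: "int ((nat (- c2) * G2) mod G1) = d"
    using \<open>0 < - c2\<close> comb assms(2,6,7)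
    by (intro int_mod_of_linear_combination[where q = "- c1"]) (auto simp: algebra_simps)
  have "nat (- c2) \<le> n2"
    using assms(9) by linarith
  moreover have "(nat (- c2) * G2) mod G1 \<noteq> 0"
    using residue \<open>0 < d\<close> by auto
  ultimately have "s \<le> (nat (- c2) * G2) mod G1"
    by (rule res2)
  with residue show False
    using \<open>d < int s\<close> by linarith
qed

lemma small_combination_eq_0:
  fixes G1 G2 s n1 n2 :: nat and c1 c2 :: int
  assumes "coprime G1 G2" and "G1 < G2" and "s \<le> G1" and "n2 < G1"
    and res1: "\<And>c. c \<le> n1 \<Longrightarrow> (c * G1) mod G2 \<noteq> 0 \<Longrightarrow> s \<le> (c * G1) mod G2"
    and res2: "\<And>c. c \<le> n2 \<Longrightarrow> (c * G2) mod G1 \<noteq> 0 \<Longrightarrow> s \<le> (c * G2) mod G1"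
    and small: "\<bar>int G1 * c1 - int G2 * c2\<bar> < int s"
    and "\<bar>c1\<bar> \<le> int n1" and "\<bar>c2\<bar> \<le> int n2"
  shows "c1 = 0 \<and> c2 = 0"
proof -
  define d where "d = int G1 * c1 - int G2 * c2"
  consider "d = 0" | "0 < d" | "0 < - d"
    by linarith
  then show ?thesis
  proof cases
    case 1
    then have "int G1 dvd int G2 * c2"
      unfolding d_def by (metis dvd_triv_left eq_iff_diff_eq_0)
    then have "int G1 dvd c2"
      using assms(1) by (simp add: coprime_dvd_mult_right_iff)
    have "c2 = 0"
    proof (rule ccontr)
      assume "c2 \<noteq> 0"
      from dvd_imp_le_int[OF this \<open>int G1 dvd c2\<close>] have "int G1 \<le> \<bar>c2\<bar>"
        by simp
      with \<open>\<bar>c2\<bar> \<le> int n2\<close> \<open>n2 < G1\<close> show False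
        by linarith
    qed
    then show ?thesis
      using 1 \<open>n2 < G1\<close> unfolding d_def by simp
  next
    case 2
    have False
      by (rule no_small_positive_combination[of G1 G2 s n1 n2 c1 c2 d, OF assms(2,3) res1 res2])
        (use 2 small assms(8,9) in \<open>simp_all add: d_def\<close>)
    then show ?thesis ..
  next
    case 3
    have False
      by (rule no_small_positive_combination[of G1 G2 s n1 n2 "- c1" "- c2" "- d",
            OF assms(2,3) res1 res2])
        (use 3 small assms(8,9) in \<open>simp_all add: d_def\<close>)
    then show ?thesis ..
  qed
qed

lemma coprime_reduced_moduli:
  fixes \<eta>1 \<eta>2 :: nat
  defines "g \<equiv> gcd \<eta>1 \<eta>2"
  defines "G1 \<equiv> \<eta>1 div g" and "G2 \<equiv> \<eta>2 div g"
  assumes "\<eta>1 < \<eta>2" and "1 < G1"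
  shows "\<eta>1 = g * G1" and "\<eta>2 = g * G2" and "coprime G1 G2" and "G1 < G2" and "0 < G2 mod G1"
proof -
  have "0 < \<eta>1"
    using \<open>1 < G1\<close> unfolding G1_def by (cases "\<eta>1 = 0") auto
  then have "0 < g"
    unfolding g_def by simp
  show \<eta>1: "\<eta>1 = g * G1" and \<eta>2: "\<eta>2 = g * G2"
    unfolding G1_def G2_def g_def by simp_all
  show coprime: "coprime G1 G2"
    unfolding G1_def G2_def g_def using \<open>0 < \<eta>1\<close> by (intro div_gcd_coprime) simp
  show "G1 < G2"
    using \<open>\<eta>1 < \<eta>2\<close> \<open>0 < g\<close> unfolding \<eta>1 \<eta>2 by simp
  show "0 < G2 mod G1"
  proof (rule ccontr)
    assume "\<not> 0 < G2 mod G1"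
    then have "G1 dvd G2"
      by (simp add: dvd_eq_mod_eq_0)
    then show False
      using coprime \<open>1 < G1\<close> by (simp add: coprime_absorb_left)
  qed
qed

lemma abs_combination_less_of_representations:
  fixes g G1 G2 s :: nat and e1 e2 c1 c2 :: int and t1 t2 :: real
  assumes "e1 + int (g * G1) * c1 = e2 + int (g * G2) * c2"
    and "\<bar>real_of_int e1\<bar> \<le> 2 * t1" and "\<bar>real_of_int e2\<bar> \<le> 2 * t2"
    and "t1 + t2 < real g * real s / 2"
  shows "\<bar>int G1 * c1 - int G2 * c2\<bar> < int s"
proof -
  have "\<bar>real_of_int e2 - real_of_int e1\<bar> \<le> \<bar>real_of_int e2\<bar> + \<bar>real_of_int e1\<bar>"
    by (rule abs_triangle_ineq4)
  then have "\<bar>real_of_int e2 - real_of_int e1\<bar> < real g * real s"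
    using assms(2-4) by linarith
  then have "real_of_int \<bar>e2 - e1\<bar> < real_of_int (int g * int s)"
    by simp
  then have "\<bar>e2 - e1\<bar> < int g * int s"
    by (simp only: of_int_less_iff)
  moreover have "e2 - e1 = int g * (int G1 * c1 - int G2 * c2)"
    using assms(1) by (simp add: algebra_simps)
  ultimately have "int g * \<bar>int G1 * c1 - int G2 * c2\<bar> < int g * int s"
    by (simp add: abs_mult)
  then show ?thesis
    by (simp add: mult_less_cancel_left)
qed

lemma diff_minus_mod_diff_eq:
  fixes N N' M :: int
  shows "N - N' - (N mod M - N' mod M) = M * (N div M - N' div M)"
  using div_mult_mod_eq[of N M] div_mult_mod_eq[of N' M] by (simp add: algebra_simps)

lemma mod_diff_eq_if_close:
  fixes N N' M M' mu :: int
  assumes "mu dvd M" and "mu dvd M'"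
    and "\<bar>(N mod M - N' mod M) - (N mod M' - N' mod M')\<bar> < mu"
  shows "N mod M - N' mod M = N mod M' - N' mod M'"
proof -
  have "mu dvd M' * (N div M' - N' div M') - M * (N div M - N' div M)"
    using assms(1,2) by simp
  moreover have "(N mod M - N' mod M) - (N mod M' - N' mod M')
      = M' * (N div M' - N' div M') - M * (N div M - N' div M)"
    using diff_minus_mod_diff_eq[of N N' M] diff_minus_mod_diff_eq[of N N' M'] by linarith
  ultimately have dvd: "mu dvd (N mod M - N' mod M) - (N mod M' - N' mod M')"
    by simp
  show ?thesis
  proof (rule ccontr)
    assume "N mod M - N' mod M \<noteq> N mod M' - N' mod M'"
    then have "\<bar>mu\<bar> \<le> \<bar>(N mod M - N' mod M) - (N mod M' - N' mod M')\<bar>"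
      using dvd_imp_le_int[OF _ dvd] by simp
    with assms(3) show False
      by linarith
  qed
qed

lemma mult_div_diff_bound:
  fixes N N' M X :: int
  assumes "0 \<le> N" and "0 \<le> N'" and "N < X" and "N' < X" and "0 \<le> M"
  shows "\<bar>M * (N div M - N' div M)\<bar> < X"
proof -
  have bounds: "0 \<le> M * (K div M) \<and> M * (K div M) \<le> K" if "0 \<le> K" for K
  proof (cases "M = 0")
    case False
    then have "0 < M"
      using assms(5) by simp
    then have "0 \<le> M * (K div M)" and "0 \<le> K mod M"
      using that by (simp_all add: pos_imp_zdiv_nonneg_iff)
    moreover have "M * (K div M) + K mod M = K"
      by (rule mult_div_mod_eq)
    ultimately show ?thesis
      by linarith
  qed (use that in simp)
  from bounds[OF \<open>0 \<le> N\<close>] bounds[OF \<open>0 \<le> N'\<close>] show ?thesis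
    using assms(3,4) by (auto simp: right_diff_distrib abs_less_iff)
qed

lemma folding_difference_in_group:
  fixes M :: "'k \<Rightarrow> nat" and mu n :: nat and T :: real and N N' X :: int
  assumes "k0 \<in> I" and mu_dvd: "\<And>k. k \<in> I \<Longrightarrow> mu dvd M k" and "T < real mu / 4"
    and close: "\<And>k. k \<in> I \<Longrightarrow> \<bar>real_of_int (N mod int (M k) - N' mod int (M k))\<bar> \<le> 2 * T"
    and "0 \<le> N" and "0 \<le> N'" and "N < X" and "N' < X"
    and X: "X \<le> int (Lcm (M ` I)) * (1 + int n)"
  obtains e c where "\<bar>real_of_int e\<bar> \<le> 2 * T" and "\<bar>c\<bar> \<le> int n"
    and "N - N' = e + int (Lcm (M ` I)) * c"
    and "\<And>k. k \<in> I \<Longrightarrow> N - N' - e = int (M k) * (N div int (M k) - N' div int (M k))"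
proof -
  define e where "e = N mod int (M k0) - N' mod int (M k0)"
  have e_eq: "N mod int (M k) - N' mod int (M k) = e" if "k \<in> I" for k
  proof -
    have "\<bar>real_of_int ((N mod int (M k) - N' mod int (M k)) - e)\<bar> < real mu"
      using close[OF that] close[OF \<open>k0 \<in> I\<close>] \<open>T < real mu / 4\<close> unfolding e_def by linarith
    then show ?thesis
      unfolding e_def using mu_dvd[OF that] mu_dvd[OF \<open>k0 \<in> I\<close>]
      by (intro mod_diff_eq_if_close[where mu = "int mu"]) auto
  qed
  have fold: "N - N' - e = int (M k) * (N div int (M k) - N' div int (M k))" if "k \<in> I" for k
    using diff_minus_mod_diff_eq e_eq[OF that] by metis
  have "Lcm (M ` I) dvd nat \<bar>N - N' - e\<bar>"
    using fold by (intro Lcm_least) auto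
  then obtain c where c: "N - N' - e = int (Lcm (M ` I)) * c"
    by (auto elim: dvdE)
  have "\<bar>int (Lcm (M ` I)) * c\<bar> < X"
    using mult_div_diff_bound[of N N' X "int (M k0)"] assms(5-8) fold[OF \<open>k0 \<in> I\<close>] c
    by simp
  then have "int (Lcm (M ` I)) * \<bar>c\<bar> < int (Lcm (M ` I)) * (1 + int n)"
    using X by (simp add: abs_mult)
  then have "\<bar>c\<bar> \<le> int n"
    by (simp add: mult_less_cancel_left)
  moreover have "\<bar>real_of_int e\<bar> \<le> 2 * T"
    using close[OF \<open>k0 \<in> I\<close>] unfolding e_def .
  ultimately show ?thesis
    using that c fold by (simp add: algebra_simps)
qed

lemma folding_difference_of_consistent:
  fixes L mu :: "nat \<Rightarrow> nat" and Gam :: "nat \<Rightarrow> nat \<Rightarrow> nat" and tau :: "nat \<Rightarrow> real"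
    and r :: "nat \<Rightarrow> nat \<Rightarrow> int" and N N' X :: int and i n :: nat
  assumes "1 \<le> L i" and "tau i < real (mu i) / 4"
    and consistent: "\<And>k. k \<in> {1..L i} \<Longrightarrow>
       \<bar>real_of_int (r i k - N mod int (modulus mu Gam i k))\<bar> \<le> tau i \<and>
       \<bar>real_of_int (r i k - N' mod int (modulus mu Gam i k))\<bar> \<le> tau i"
    and "0 \<le> N" and "0 \<le> N'" and "N < X" and "N' < X"
    and "X \<le> int (eta L mu Gam i) * (1 + int n)"
  shows "\<exists>e c. \<bar>real_of_int e\<bar> \<le> 2 * tau i \<and> \<bar>c\<bar> \<le> int n \<and>
    N - N' = e + int (eta L mu Gam i) * c \<and>
    (\<forall>k\<in>{1..L i}. N - N' - e = int (modulus mu Gam i k) *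
       (N div int (modulus mu Gam i k) - N' div int (modulus mu Gam i k)))"
proof -
  have close: "\<bar>real_of_int (N mod int (modulus mu Gam i k) - N' mod int (modulus mu Gam i k))\<bar>
      \<le> 2 * tau i" if "k \<in> {1..L i}" for k
    using consistent[OF that] by (simp add: abs_le_iff)
  obtain e c where "\<bar>real_of_int e\<bar> \<le> 2 * tau i" and "\<bar>c\<bar> \<le> int n"
    and "N - N' = e + int (eta L mu Gam i) * c"
    and "\<And>k. k \<in> {1..L i} \<Longrightarrow> N - N' - e = int (modulus mu Gam i k) *
       (N div int (modulus mu Gam i k) - N' div int (modulus mu Gam i k))"
    by (rule folding_difference_in_group[of 1 "{1..L i}" "mu i" "modulus mu Gam i" "tau i" N N' X n])
      (use assms close in \<open>auto simp: modulus_def eta_def\<close>)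
  then show ?thesis
    by blast
qed

lemma folding_integers_unique:
  fixes L mu :: "nat \<Rightarrow> nat" and Gam :: "nat \<Rightarrow> nat \<Rightarrow> nat"
    and j :: nat and tau :: "nat \<Rightarrow> real" and N N' :: int and r :: "nat \<Rightarrow> nat \<Rightarrow> int"
  defines "\<eta>1 \<equiv> eta L mu Gam 1" and "\<eta>2 \<equiv> eta L mu Gam 2"
  defines "g \<equiv> gcd \<eta>1 \<eta>2"
  defines "G1 \<equiv> \<eta>1 div g" and "G2 \<equiv> \<eta>2 div g"
  defines "s \<equiv> sigma G1 G2 (int j)"
    and "n1 \<equiv> nddot1 G1 G2 (int j)" and "n2 \<equiv> nddot2 G1 G2 (int j)"
  defines "X \<equiv> int (min (\<eta>2 * (1 + n2)) (\<eta>1 * (1 + n1)))"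
  assumes L_pos: "\<forall>i\<in>{1,2}. L i \<ge> 1"
    and mu_pos: "\<forall>i\<in>{1,2}. mu i \<ge> 1"
    and Gam_pos: "\<forall>i\<in>{1,2}. \<forall>k\<in>{1..L i}. Gam i k \<ge> 1"
    and "\<eta>1 < \<eta>2" and "1 < G1" and "1 \<le> j"
    and tau_bd: "\<And>i. i \<in> {1,2} \<Longrightarrow> tau i < real (mu i) / 4"
    and tau_sum: "tau 1 + tau 2 < real g * real s / 2"
    and N: "0 \<le> N" "N < X" and N': "0 \<le> N'" "N' < X"
    and consistent: "\<And>i k. i \<in> {1,2} \<Longrightarrow> k \<in> {1..L i} \<Longrightarrow>
       \<bar>real_of_int (r i k - N mod int (modulus mu Gam i k))\<bar> \<le> tau i \<and>
       \<bar>real_of_int (r i k - N' mod int (modulus mu Gam i k))\<bar> \<le> tau i"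
    and "i \<in> {1,2}" and "k \<in> {1..L i}"
  shows "N div int (modulus mu Gam i k) = N' div int (modulus mu Gam i k)"
proof -
  have \<eta>1: "\<eta>1 = g * G1" and \<eta>2: "\<eta>2 = g * G2" and coprime: "coprime G1 G2"
    and "G1 < G2" and "0 < G2 mod G1"
    using coprime_reduced_moduli[OF \<open>\<eta>1 < \<eta>2\<close>] \<open>1 < G1\<close> unfolding G1_def G2_def g_def by auto
  then have "s \<le> G2 mod G1"
    unfolding s_def using \<open>1 \<le> j\<close> by (intro sigma_le_mod)
  then have "s \<le> G1"
    using mod_less_divisor[of G1 G2] \<open>1 < G1\<close> by linarith
  note nddot2 = nddot2_residues[OF \<open>1 < G1\<close> \<open>0 < G2 mod G1\<close> \<open>s \<le> G2 mod G1\<close>[unfolded s_def],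
      folded s_def n2_def]
  have "0 < G1"
    using \<open>1 < G1\<close> by simp
  note nddot1 = nddot1_residues[OF \<open>0 < G1\<close> \<open>G1 < G2\<close> \<open>s \<le> G1\<close>[unfolded s_def], folded s_def n1_def]
  have "X \<le> int (\<eta>1 * (1 + n1))" and "X \<le> int (\<eta>2 * (1 + n2))"
    unfolding X_def of_nat_le_iff by simp_all
  then have X1: "X \<le> int \<eta>1 * (1 + int n1)" and X2: "X \<le> int \<eta>2 * (1 + int n2)"
    by (simp_all add: distrib_left)
  have group1: "(1::nat) \<in> {1,2}" and group2: "(2::nat) \<in> {1,2}"
    by simp_all
  obtain e1 c1 where e1: "\<bar>real_of_int e1\<bar> \<le> 2 * tau 1" "\<bar>c1\<bar> \<le> int n1" "N - N' = e1 + int \<eta>1 * c1"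
    and fold1: "\<forall>k\<in>{1..L 1}. N - N' - e1 = int (modulus mu Gam 1 k) *
       (N div int (modulus mu Gam 1 k) - N' div int (modulus mu Gam 1 k))"
    using folding_difference_of_consistent[where L = L and i = 1 and mu = mu and Gam = Gam and tau = tau
          and r = r, OF L_pos[rule_format, OF group1] tau_bd[OF group1]
          consistent[OF group1] N(1) N'(1) N(2) N'(2) X1[unfolded \<eta>1_def]]
    unfolding \<eta>1_def by blast
  obtain e2 c2 where e2: "\<bar>real_of_int e2\<bar> \<le> 2 * tau 2" "\<bar>c2\<bar> \<le> int n2" "N - N' = e2 + int \<eta>2 * c2"
    and fold2: "\<forall>k\<in>{1..L 2}. N - N' - e2 = int (modulus mu Gam 2 k) *
       (N div int (modulus mu Gam 2 k) - N' div int (modulus mu Gam 2 k))"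
    using folding_difference_of_consistent[where L = L and i = 2 and mu = mu and Gam = Gam and tau = tau
          and r = r, OF L_pos[rule_format, OF group2] tau_bd[OF group2]
          consistent[OF group2] N(1) N'(1) N(2) N'(2) X2[unfolded \<eta>2_def]]
    unfolding \<eta>2_def by blast
  have "e1 + int (g * G1) * c1 = e2 + int (g * G2) * c2"
    using e1(3) e2(3) unfolding \<eta>1 \<eta>2 by simp
  from abs_combination_less_of_representations[OF this e1(1) e2(1) tau_sum]
  have "c1 = 0 \<and> c2 = 0"
    using small_combination_eq_0[OF coprime \<open>G1 < G2\<close> \<open>s \<le> G1\<close> nddot2(1) nddot1 nddot2(2)]
      e1(2) e2(2) by simp
  then have "int (modulus mu Gam i k) * (N div int (modulus mu Gam i k) - N' div int (modulus mu Gam i k)) = 0"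
    using e1(3) e2(3) fold1 fold2 \<open>i \<in> {1,2}\<close> \<open>k \<in> {1..L i}\<close> by auto
  moreover have "1 \<le> mu i" and "1 \<le> Gam i k"
    using mu_pos Gam_pos \<open>i \<in> {1,2}\<close> \<open>k \<in> {1..L i}\<close> by blast+
  then have "0 < modulus mu Gam i k"
    by (simp add: modulus_def)
  ultimately show ?thesis
    by simp
qed

lemma ex_decoder_if_determined:
  assumes "\<And>x x' y i k. P x y \<Longrightarrow> P x' y \<Longrightarrow> i \<in> I \<Longrightarrow> k \<in> J i \<Longrightarrow> f x i k = f x' i k"
  shows "\<exists>\<Phi>. \<forall>x y. P x y \<longrightarrow> (\<forall>i\<in>I. \<forall>k\<in>J i. \<Phi> y i k = f x i k)"
proof (intro exI allI impI ballI)
  fix x y i k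
  assume "P x y" and "i \<in> I" and "k \<in> J i"
  from \<open>P x y\<close> have "P (SOME x. P x y) y"
    by (rule someI)
  from this \<open>P x y\<close> \<open>i \<in> I\<close> \<open>k \<in> J i\<close> show "f (SOME x. P x y) i k = f x i k"
    by (rule assms)
qed

theorem theorem3:
  fixes L mu :: "nat \<Rightarrow> nat" and Gam :: "nat \<Rightarrow> nat \<Rightarrow> nat"
    and j :: nat and tau :: "nat \<Rightarrow> real"
  assumes L_pos: "\<forall>i\<in>{1,2}. L i \<ge> 1"
    and mu_pos: "\<forall>i\<in>{1,2}. mu i \<ge> 1"
    and Gam_pos: "\<forall>i\<in>{1,2}. \<forall>k\<in>{1..L i}. Gam i k \<ge> 1"
    and Gam_coprime: "\<forall>i\<in>{1,2}. \<forall>k\<in>{1..L i}. \<forall>k'\<in>{1..L i}.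
                         k \<noteq> k' \<longrightarrow> coprime (Gam i k) (Gam i k')"
    and eta_less: "eta L mu Gam 1 < eta L mu Gam 2"
    and Gam1_gt: "eta L mu Gam 1 div gcd (eta L mu Gam 1) (eta L mu Gam 2) > 1"
    and j_range: "1 \<le> j"
      "j \<le> Kidx (eta L mu Gam 1 div gcd (eta L mu Gam 1) (eta L mu Gam 2))
                 (eta L mu Gam 2 div gcd (eta L mu Gam 1) (eta L mu Gam 2)) + 1"
    and tau_nonneg: "tau 1 \<ge> 0" "tau 2 \<ge> 0"
    and tau1_bd: "tau 1 < real (mu 1) / 4"
    and tau2_bd: "tau 2 < real (mu 2) / 4"
    and tau_sum: "tau 1 + tau 2 <
        real (gcd (eta L mu Gam 1) (eta L mu Gam 2)) *
        real (sigma (eta L mu Gam 1 div gcd (eta L mu Gam 1) (eta L mu Gam 2))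
                    (eta L mu Gam 2 div gcd (eta L mu Gam 1) (eta L mu Gam 2)) (int j)) / 2"
  shows "\<exists>\<Phi> :: (nat \<Rightarrow> nat \<Rightarrow> int) \<Rightarrow> (nat \<Rightarrow> nat \<Rightarrow> int).
    \<forall>N :: int. 0 \<le> N \<and>
      N < int (min
        (eta L mu Gam 2 * (1 + nddot2
            (eta L mu Gam 1 div gcd (eta L mu Gam 1) (eta L mu Gam 2))
            (eta L mu Gam 2 div gcd (eta L mu Gam 1) (eta L mu Gam 2)) (int j)))
        (eta L mu Gam 1 * (1 + nddot1
            (eta L mu Gam 1 div gcd (eta L mu Gam 1) (eta L mu Gam 2))
            (eta L mu Gam 2 div gcd (eta L mu Gam 1) (eta L mu Gam 2)) (int j)))) \<longrightarrow>
    (\<forall>r :: nat \<Rightarrow> nat \<Rightarrow> int.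
       (\<forall>i\<in>{1,2}. \<forall>k\<in>{1..L i}.
          0 \<le> r i k \<and> r i k < int (modulus mu Gam i k) \<and>
          \<bar>real_of_int (r i k - N mod int (modulus mu Gam i k))\<bar> \<le> tau i) \<longrightarrow>
       (\<forall>i\<in>{1,2}. \<forall>k\<in>{1..L i}. \<Phi> r i k = N div int (modulus mu Gam i k)))"
  (is "\<exists>\<Phi>. \<forall>N. ?admissible N \<longrightarrow> (\<forall>r. ?consistent N r \<longrightarrow> _)")
proof -
  have "\<exists>\<Phi>. \<forall>N r. ?admissible N \<and> ?consistent N r \<longrightarrow>
      (\<forall>i\<in>{1,2}. \<forall>k\<in>{1..L i}. \<Phi> r i k = N div int (modulus mu Gam i k))"
  proof (rule ex_decoder_if_determined)
    fix N N' r i k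
    assume "?admissible N \<and> ?consistent N r" and "?admissible N' \<and> ?consistent N' r"
      and "i \<in> {1,2}" and "k \<in> {1..L i}"
    then show "N div int (modulus mu Gam i k) = N' div int (modulus mu Gam i k)"
      by (intro folding_integers_unique[where r = r, OF L_pos mu_pos Gam_pos eta_less Gam1_gt
            j_range(1) _ tau_sum]) (use tau1_bd tau2_bd in auto)
  qed
  then show ?thesis
    by blast
qed

end
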